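(* Let $x_1>\cdots>x_N$ be real, $\mathbf y\in\mathbb R^N$, and $\mathbf A\in\{-1,1\}^{N\times N}$ with $\mathbf A_{i,n}=\mathrm{sign}(x_i-x_n)$. Then for every $\beta\ge0$ the problem $\min_{\mathbf z\in\mathbb R^N}\frac12\|\mathbf A\mathbf z-\mathbf y\|_2^2+\beta\|\mathbf z\|_1$ has a unique solution, and the solution of the minimum-norm problem $\min_{\mathbf z}\|\mathbf z\|_1$ subject to $\mathbf A\mathbf z=\mathbf y$ is $\mathbf z^*=\mathbf A^{-1}\mathbf y$.
   Context: $\mathrm{sign}(x)=1$ if $x\ge0$ and $-1$ if $x<0$. (This $\mathbf A$ is the dictionary of a two-layer sign-activated network on one-dimensional data; it is upper triangular-type: entries $1$ on and above the diagonal, $-1$ below.) *)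

theory Defs
  imports "HOL-Analysis.Analysis"
begin

text \<open>sign(x) = 1 if x >= 0 and -1 if x < 0 (paper's convention).\<close>
definition sign :: "real \<Rightarrow> real" where
  "sign t = (if t \<ge> 0 then 1 else -1)"

definition sign_dict :: "real ^ 'n \<Rightarrow> real ^ 'n ^ 'n" where
  "sign_dict x = (\<chi> i n. sign (x $ i - x $ n))"

definition l1norm :: "real ^ 'n \<Rightarrow> real" where
  "l1norm z = (\<Sum>i\<in>UNIV. \<bar>z $ i\<bar>)"

end

theory Submission
  imports Defs
begin

text \<open>For strictly decreasing \<open>x\<close> the dictionary has entries \<open>1\<close> on and above the
  diagonal and \<open>-1\<close> below, so \<open>(A z)\<^sub>i\<close> is the total sum of \<open>z\<close> minus twice its prefix
  sum before \<open>i\<close>. If \<open>A z = 0\<close>, the first row makes the total sum vanish, hence every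
  prefix sum vanishes and \<open>z = 0\<close>. So \<open>A\<close> is invertible and \<open>A\<^sup>-\<^sup>1 y\<close> is the only
  feasible point of the minimum-norm problem. For the lasso, injectivity of \<open>A\<close> makes
  the residual term coercive and strictly convex (parallelogram law), while the \<open>l1\<close> term
  is convex and nonnegative; a continuous coercive strictly convex function has exactly
  one minimizer.\<close>

lemma sign_dict_component:
  fixes x :: "real ^ 'n::{finite, linorder}"
  assumes decr: "\<forall>i j. i < j \<longrightarrow> x $ i > x $ j"
  shows "sign_dict x $ i $ n = (if i \<le> n then 1 else -1)"
  using decr[rule_format, of i n] decr[rule_format, of n i]
  unfolding sign_dict_def sign_def by (cases i n rule: linorder_cases) auto

lemma sign_dict_mult_component:
  fixes x z :: "real ^ 'n::{finite, linorder}"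
  assumes decr: "\<forall>i j. i < j \<longrightarrow> x $ i > x $ j"
  shows "(sign_dict x *v z) $ i = (\<Sum>n\<in>UNIV. z $ n) - 2 * (\<Sum>n | n < i. z $ n)"
proof -
  have "(if i \<le> n then 1 else -1) * z $ n = z $ n - 2 * (if n < i then z $ n else 0)" for n
    by (cases "i \<le> n") auto
  then show ?thesis
    by (simp add: matrix_vector_mult_def sign_dict_component[OF decr] sum_subtractf
        sum_distrib_left[symmetric] sum.If_cases)
qed

text \<open>At the largest index \<open>i\<close> with \<open>z\<^sub>i \<noteq> 0\<close>, the total sum is the prefix sum plus \<open>z\<^sub>i\<close>.\<close>
lemma vec_eq_0_if_prefix_sums_eq_0:
  fixes z :: "'a::comm_monoid_add ^ 'n::{finite, linorder}"
  assumes prefix: "\<And>i. (\<Sum>n | n < i. z $ n) = 0" and total: "(\<Sum>n\<in>UNIV. z $ n) = 0"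
  shows "z = 0"
proof (rule ccontr)
  assume "z \<noteq> 0"
  then have support_ne: "{n. z $ n \<noteq> 0} \<noteq> {}" by (auto simp: vec_eq_iff)
  define i where "i = Max {n. z $ n \<noteq> 0}"
  have zi: "z $ i \<noteq> 0"
    using Max_in[OF finite support_ne] unfolding i_def by simp
  have above: "z $ n = 0" if "i < n" for n
    using Max_ge[of "{n. z $ n \<noteq> 0}" n] that unfolding i_def by fastforce
  have "(\<Sum>n\<in>UNIV. z $ n) = (\<Sum>n\<in>insert i {n. n < i}. z $ n)"
    by (rule sum.mono_neutral_right) (auto intro: above simp: not_less_iff_gr_or_eq)
  also have "\<dots> = z $ i" by (simp add: prefix)
  finally show False using total zi by simp
qed

lemma sign_dict_mult_eq_0D:
  fixes x z :: "real ^ 'n::{finite, linorder}"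
  assumes decr: "\<forall>i j. i < j \<longrightarrow> x $ i > x $ j"
    and kernel: "sign_dict x *v z = 0"
  shows "z = 0"
proof (rule vec_eq_0_if_prefix_sums_eq_0)
  have row: "(\<Sum>n\<in>UNIV. z $ n) = 2 * (\<Sum>n | n < i. z $ n)" for i
    using arg_cong[OF kernel, of "\<lambda>v. v $ i"] by (simp add: sign_dict_mult_component[OF decr])
  define first :: 'n where "first = Min UNIV"
  have "first \<le> n" for n unfolding first_def by (rule Min_le) simp_all
  then have "{n. n < first} = {}" by (auto simp: not_less)
  then show total: "(\<Sum>n\<in>UNIV. z $ n) = 0" using row[of first] by simp
  show "(\<Sum>n | n < i. z $ n) = 0" for i using row[of i] total by simp
qed

lemma invertible_sign_dict:
  fixes x :: "real ^ 'n::{finite, linorder}"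
  assumes decr: "\<forall>i j. i < j \<longrightarrow> x $ i > x $ j"
  shows "invertible (sign_dict x)"
  unfolding invertible_left_inverse matrix_left_invertible_ker
  using sign_dict_mult_eq_0D[OF decr] by blast

lemma invertible_mult_eq_iff:
  fixes A :: "'a::field ^ 'n ^ 'n"
  assumes "invertible A"
  shows "A *v w = y \<longleftrightarrow> w = matrix_inv A *v y"
proof -
  have "A ** matrix_inv A = mat 1 \<and> matrix_inv A ** A = mat 1"
    using assms unfolding invertible_def matrix_inv_def by (rule someI_ex)
  then show ?thesis by (metis matrix_vector_mul_assoc matrix_vector_mul_lid)
qed

lemma ex1_minimizer:
  fixes f :: "'a::{heine_borel, real_normed_vector} \<Rightarrow> real"
  assumes cont: "continuous_on UNIV f"
    and sublevel: "bounded {z. f z \<le> f a}"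
    and midpoint_less: "\<And>u v. u \<noteq> v \<Longrightarrow> f (midpoint u v) < (f u + f v) / 2"
  shows "\<exists>!z. \<forall>w. f z \<le> f w"
proof (rule ex_ex1I)
  let ?K = "{z. f z \<le> f a}"
  have "compact ?K"
    using sublevel cont by (simp add: compact_eq_bounded_closed closed_Collect_le)
  moreover have "continuous_on ?K f" using cont by (rule continuous_on_subset) simp
  moreover have "?K \<noteq> {}" by blast
  ultimately obtain z where "z \<in> ?K" and least: "\<forall>w\<in>?K. f z \<le> f w"
    using continuous_attains_inf by blast
  have "f z \<le> f w" for w
    using least \<open>z \<in> ?K\<close> by (cases "f w \<le> f a") auto
  then show "\<exists>z. \<forall>w. f z \<le> f w" by blast
next
  fix u v assume u: "\<forall>w. f u \<le> f w" and v: "\<forall>w. f v \<le> f w"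
  show "u = v"
  proof (rule ccontr)
    assume "u \<noteq> v"
    then have "f (midpoint u v) < f u"
      using midpoint_less[of u v] u[rule_format, of v] v[rule_format, of u] by simp
    then show False using u by (meson not_le)
  qed
qed

lemma l1norm_nonneg: "l1norm z \<ge> 0"
  unfolding l1norm_def by (simp add: sum_nonneg)

lemma l1norm_midpoint_le: "l1norm (midpoint u v) \<le> (l1norm u + l1norm v) / 2"
proof -
  have "l1norm (midpoint u v) \<le> (\<Sum>i\<in>UNIV. (\<bar>u $ i\<bar> + \<bar>v $ i\<bar>) / 2)"
    unfolding l1norm_def midpoint_def by (rule sum_mono) (simp add: abs_triangle_ineq)
  also have "\<dots> = (l1norm u + l1norm v) / 2"
    unfolding l1norm_def by (simp add: sum_divide_distrib[symmetric] sum.distrib)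
  finally show ?thesis .
qed

lemma midpoint_diff: "midpoint (a - b) (c - d) = midpoint a c - midpoint b d"
  by (simp add: midpoint_def algebra_simps)

lemma power2_norm_midpoint:
  fixes a b :: "'a::real_inner"
  shows "(norm (midpoint a b))\<^sup>2 = ((norm a)\<^sup>2 + (norm b)\<^sup>2) / 2 - (norm (a - b))\<^sup>2 / 4"
  unfolding power2_norm_eq_inner midpoint_def
  by (simp add: inner_simps inner_commute field_simps)

definition lasso_objective :: "real ^ 'n ^ 'm \<Rightarrow> real ^ 'm \<Rightarrow> real \<Rightarrow> real ^ 'n \<Rightarrow> real"
  where "lasso_objective A y \<beta> z = (1/2) * (norm (A *v z - y))\<^sup>2 + \<beta> * l1norm z"

lemma continuous_on_lasso_objective: "continuous_on S (lasso_objective A y \<beta>)"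
  unfolding lasso_objective_def l1norm_def
  by (intro continuous_intros linear_continuous_on matrix_vector_mul_bounded_linear)

lemma bounded_lasso_sublevel:
  fixes A :: "real ^ 'n ^ 'm"
  assumes inj: "\<forall>v. A *v v = 0 \<longrightarrow> v = 0" and "\<beta> \<ge> 0"
  shows "bounded {z. lasso_objective A y \<beta> z \<le> c}"
proof -
  obtain B :: "real ^ 'm ^ 'n" where B: "B ** A = mat 1"
    using inj matrix_left_invertible_ker by blast
  have "{z. lasso_objective A y \<beta> z \<le> c} \<subseteq> (\<lambda>v. B *v v) ` cball y (sqrt (2 * c))"
  proof
    fix z assume "z \<in> {z. lasso_objective A y \<beta> z \<le> c}"
    then have "(norm (A *v z - y))\<^sup>2 \<le> 2 * c"
      using mult_nonneg_nonneg[OF \<open>\<beta> \<ge> 0\<close> l1norm_nonneg[of z]]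
      unfolding lasso_objective_def by simp
    then have "A *v z \<in> cball y (sqrt (2 * c))"
      by (simp add: dist_norm norm_minus_commute real_le_rsqrt)
    moreover have "z = B *v (A *v z)" by (simp add: matrix_vector_mul_assoc B)
    ultimately show "z \<in> (\<lambda>v. B *v v) ` cball y (sqrt (2 * c))" by blast
  qed
  moreover have "compact ((\<lambda>v. B *v v) ` cball y (sqrt (2 * c)))"
    by (intro compact_continuous_image linear_continuous_on
        matrix_vector_mul_bounded_linear compact_cball)
  ultimately show ?thesis using bounded_subset compact_imp_bounded by blast
qed

lemma lasso_objective_midpoint_less:
  fixes A :: "real ^ 'n ^ 'm"
  assumes inj: "\<forall>v. A *v v = 0 \<longrightarrow> v = 0" and "\<beta> \<ge> 0" and "u \<noteq> v"
  shows "lasso_objective A y \<beta> (midpoint u v)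
           < (lasso_objective A y \<beta> u + lasso_objective A y \<beta> v) / 2"
proof -
  define a where "a = A *v u - y"
  define b where "b = A *v v - y"
  have "a - b = A *v (u - v)" unfolding a_def b_def by (simp add: matrix_vector_mult_diff_distrib)
  then have "(norm (a - b))\<^sup>2 > 0" using inj \<open>u \<noteq> v\<close> by auto
  moreover have "A *v midpoint u v - y = midpoint a b"
    unfolding a_def b_def midpoint_diff
    by (simp add: midpoint_linear_image matrix_vector_mul_linear)
  then have "(norm (A *v midpoint u v - y))\<^sup>2
      = ((norm a)\<^sup>2 + (norm b)\<^sup>2) / 2 - (norm (a - b))\<^sup>2 / 4"
    by (simp only: power2_norm_midpoint)
  ultimately have "(norm (A *v midpoint u v - y))\<^sup>2 < ((norm a)\<^sup>2 + (norm b)\<^sup>2) / 2"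
    by linarith
  moreover have "\<beta> * l1norm (midpoint u v) \<le> \<beta> * ((l1norm u + l1norm v) / 2)"
    using \<open>\<beta> \<ge> 0\<close> l1norm_midpoint_le by (rule mult_left_mono[rotated])
  ultimately show ?thesis
    unfolding lasso_objective_def a_def b_def by (simp add: field_simps)
qed

lemma ex1_lasso_minimizer:
  fixes A :: "real ^ 'n ^ 'm"
  assumes "\<forall>v. A *v v = 0 \<longrightarrow> v = 0" and "\<beta> \<ge> 0"
  shows "\<exists>!z. \<forall>w. lasso_objective A y \<beta> z \<le> lasso_objective A y \<beta> w"
  by (intro ex1_minimizer[where a = 0] continuous_on_lasso_objective bounded_lasso_sublevel
      lasso_objective_midpoint_less assms)

theorem proposition5:
  fixes x y :: "real ^ 'n::{finite, linorder}"
  assumes decr: "\<forall>i j. i < j \<longrightarrow> x $ i > x $ j"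
  shows "(\<forall>\<beta>::real. \<beta> \<ge> 0 \<longrightarrow>
            (\<exists>!z. \<forall>w. (1/2) * (norm (sign_dict x *v z - y))\<^sup>2 + \<beta> * l1norm z
                      \<le> (1/2) * (norm (sign_dict x *v w - y))\<^sup>2 + \<beta> * l1norm w))
       \<and> invertible (sign_dict x)
       \<and> (\<forall>z. (sign_dict x *v z = y \<and> (\<forall>w. sign_dict x *v w = y \<longrightarrow> l1norm z \<le> l1norm w))
                \<longleftrightarrow> z = matrix_inv (sign_dict x) *v y)"
proof (intro conjI allI impI)
  show "\<exists>!z. \<forall>w. (1/2) * (norm (sign_dict x *v z - y))\<^sup>2 + \<beta> * l1norm z
                  \<le> (1/2) * (norm (sign_dict x *v w - y))\<^sup>2 + \<beta> * l1norm w"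
    if "\<beta> \<ge> 0" for \<beta>
    using ex1_lasso_minimizer[OF _ that] sign_dict_mult_eq_0D[OF decr]
    unfolding lasso_objective_def by blast
  show inv: "invertible (sign_dict x)" by (rule invertible_sign_dict[OF decr])
  show "(sign_dict x *v z = y \<and> (\<forall>w. sign_dict x *v w = y \<longrightarrow> l1norm z \<le> l1norm w))
          \<longleftrightarrow> z = matrix_inv (sign_dict x) *v y" for z
    unfolding invertible_mult_eq_iff[OF inv] by blast
qed

end
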